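(* Let $\mathcal{T}$ be a tiling of $\mathbb{R}^d$ with finite local complexity that is repetitive. Let $\mathcal{P}$ be a nonempty finite $\mathcal{T}$-legal patch and $\{b_1,\dots,b_d\}$ a basis of $\mathbb{R}^d$. The following are equivalent: (1) for each $n>0$, the set $\bigcup_{(l_1,\dots,l_d)\in\{1,\dots,n\}^d}\left(\mathcal{P}+\sum_{i=1}^d l_ib_i\right)$ is a $\mathcal{T}$-legal patch; (2) the set $\bigcup_{(l_1,\dots,l_d)\in\mathbb{Z}^d}\left(\mathcal{P}+\sum_{i=1}^d l_ib_i\right)$ is $\mathcal{S}$-legal for every $\mathcal{S}\in X_{\mathcal{T}}$.
   Context: A tile in $\mathbb{R}^d$ is a compact set equal to the closure of its interior, possibly labeled from a finite set. A patch is a (possibly infinite) set of tiles with pairwise disjoint interiors; a tiling is a patch whose support is $\mathbb{R}^d$; $\mathcal{P}+x=\{T+x:T\in\mathcal{P}\}$. A patch $\mathcal{P}$ is $\mathcal{S}$-legal if $\mathcal{P}+y\subset\mathcal{S}$ for some $y\in\mathbb{R}^d$. $\mathcal{P}\sqcap S=\{T\in\mathcal{P}:\operatorname{supp}T\cap S\neq\emptyset\}$. $\mathcal{T}$ has finite local complexity if for each compact $K$ the set $\{\mathcal{T}\sqcap(K+x):x\in\mathbb{R}^d\}$ is finite up to translation, and is repetitive if for every finite $\mathcal{T}$-legal patch $\mathcal{P}$ there is $R>0$ such that every ball of radius $R$ contains the support of some translate $\mathcal{P}+x\subset\mathcal{T}$. The local matching metric: $\rho(\mathcal{P}_1,\mathcal{P}_2)$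 is the infimum of $\varepsilon\in(0,1/\sqrt2)$ for which there are $x_1,x_2$ with $\|x_i\|\le\varepsilon$ and $(\mathcal{P}_1+x_1)\sqcap B_{1/\varepsilon}=(\mathcal{P}_2+x_2)\sqcap B_{1/\varepsilon}$, or $1/\sqrt2$ if there are none. The hull $X_{\mathcal{T}}$ is the closure of $\{\mathcal{T}+x\}$ in this metric. *)

theory Defs
  imports "HOL-Analysis.Analysis"
begin

type_synonym ('n, 'l) tile = "(real^'n) set \<times> 'l"

definition is_tile :: "('n::finite, 'l) tile \<Rightarrow> bool" where
  "is_tile T \<longleftrightarrow> compact (fst T) \<and> fst T \<noteq> {} \<and> closure (interior (fst T)) = fst T"

definition tile_translate :: "('n::finite, 'l) tile \<Rightarrow> real^'n \<Rightarrow> ('n, 'l) tile" where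
  "tile_translate T x = ((\<lambda>y. y + x) ` fst T, snd T)"

definition patch_translate :: "('n::finite, 'l) tile set \<Rightarrow> real^'n \<Rightarrow> ('n, 'l) tile set" where
  "patch_translate P x = (\<lambda>T. tile_translate T x) ` P"

definition is_patch :: "('n::finite, 'l) tile set \<Rightarrow> bool" where
  "is_patch P \<longleftrightarrow> (\<forall>T\<in>P. is_tile T) \<and>
     (\<forall>T1\<in>P. \<forall>T2\<in>P. T1 \<noteq> T2 \<longrightarrow> interior (fst T1) \<inter> interior (fst T2) = {})"

definition supp :: "('n::finite, 'l) tile set \<Rightarrow> (real^'n) set" where
  "supp P = (\<Union>T\<in>P. fst T)"

definition is_tiling :: "('n::finite, 'l) tile set \<Rightarrow> bool" where
  "is_tiling P \<longleftrightarrow> is_patch P \<and> supp P = UNIV"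

definition legal :: "('n::finite, 'l) tile set \<Rightarrow> ('n, 'l) tile set \<Rightarrow> bool" where
  "legal S P \<longleftrightarrow> (\<exists>y. patch_translate P y \<subseteq> S)"

definition patch_restrict :: "('n::finite, 'l) tile set \<Rightarrow> (real^'n) set \<Rightarrow> ('n, 'l) tile set" where
  "patch_restrict P K = {T \<in> P. fst T \<inter> K \<noteq> {}}"

definition finite_local_complexity :: "('n::finite, 'l) tile set \<Rightarrow> bool" where
  "finite_local_complexity \<T> \<longleftrightarrow>
     (\<forall>K. compact K \<longrightarrow> (\<exists>F. finite F \<and>
        (\<forall>x. \<exists>Q\<in>F. \<exists>z. patch_restrict \<T> ((\<lambda>y. y + x) ` K) = patch_translate Q z)))"

definition repetitive :: "('n::finite, 'l) tile set \<Rightarrow> bool" where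
  "repetitive \<T> \<longleftrightarrow>
     (\<forall>P. finite P \<and> is_patch P \<and> legal \<T> P \<longrightarrow>
        (\<exists>R>0. \<forall>c. \<exists>x. patch_translate P x \<subseteq> \<T> \<and> supp (patch_translate P x) \<subseteq> cball c R))"

definition rho :: "('n::finite, 'l) tile set \<Rightarrow> ('n, 'l) tile set \<Rightarrow> real" where
  "rho P1 P2 = Inf ({e. 0 < e \<and> e < 1 / sqrt 2 \<and>
       (\<exists>x1 x2. norm x1 \<le> e \<and> norm x2 \<le> e \<and>
          patch_restrict (patch_translate P1 x1) (ball 0 (1/e)) =
          patch_restrict (patch_translate P2 x2) (ball 0 (1/e)))} \<union> {1 / sqrt 2})"

definition hull_of :: "('n::finite, 'l) tile set \<Rightarrow> ('n, 'l) tile set set" where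
  "hull_of \<T> = {S. \<forall>e>0. \<exists>x. rho S (patch_translate \<T> x) < e}"

end

theory Submission
  imports Defs
begin

text \<open>
  (2) implies (1) because T lies in its own hull, and a subpatch of a T-legal patch is a
  T-legal patch.

  For the converse let U be the full lattice patch and S a point of the hull. First, on every
  ball some translate of U agrees with T: pick tiles of T whose points form a fine net of a
  neighbourhood of the ball; by repetitivity this finite patch recurs within a fixed distance
  R of the centre of every large legal block, and each tile of the block near the recurrence
  equals the recurring tile that shares an interior point with it. Since S agrees with a
  translate of T on every ball, U + z_r agrees with S on the ball of radius r for some z_r,
  which can be reduced modulo the lattice to a bounded set. A convergent subsequence of the
  z_r is eventually constant, because two nearby translates of one tile overlap and so cannot
  both lie in S; its final value z gives U + z \<subseteq> S.
\<close>

section \<open>Translating tiles and patches\<close>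

lemma fst_tile_translate: "fst (tile_translate T x) = (\<lambda>y. y + x) ` fst T"
  by (simp add: tile_translate_def)

lemma tile_translate_add: "tile_translate (tile_translate T a) c = tile_translate T (a + c)"
  by (simp add: tile_translate_def image_image add.assoc)

lemma tile_translate_0 [simp]: "tile_translate T 0 = T"
  by (simp add: tile_translate_def)

lemma tile_translate_eq_iff: "tile_translate T a = tile_translate T' a \<longleftrightarrow> T = T'"
  by (metis tile_translate_add tile_translate_0 add.right_inverse)

lemma mem_patch_translate_iff: "X \<in> patch_translate P a \<longleftrightarrow> tile_translate X (- a) \<in> P"
  unfolding patch_translate_def
proof
  assume "X \<in> (\<lambda>T. tile_translate T a) ` P"
  then show "tile_translate X (- a) \<in> P" by (auto simp: tile_translate_add)
next
  assume "tile_translate X (- a) \<in> P"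
  then show "X \<in> (\<lambda>T. tile_translate T a) ` P"
    by (rule rev_image_eqI) (simp add: tile_translate_add)
qed

lemma mem_patch_translate_iff_ex: "X \<in> patch_translate P a \<longleftrightarrow> (\<exists>A\<in>P. X = tile_translate A a)"
  unfolding patch_translate_def by blast

lemma tile_translate_mem_patch_translate_iff:
  "tile_translate X a \<in> patch_translate P a \<longleftrightarrow> X \<in> P"
  by (simp add: mem_patch_translate_iff tile_translate_add)

lemma patch_translate_add: "patch_translate (patch_translate P a) c = patch_translate P (a + c)"
  by (simp add: patch_translate_def image_image tile_translate_add)

lemma patch_translate_0 [simp]: "patch_translate P 0 = P"
  by (simp add: patch_translate_def)

lemma patch_translate_UN: "patch_translate (\<Union>l\<in>L. F l) a = (\<Union>l\<in>L. patch_translate (F l) a)"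
  by (simp add: patch_translate_def image_UN)

lemma patch_translate_mono: "P \<subseteq> Q \<Longrightarrow> patch_translate P a \<subseteq> patch_translate Q a"
  by (simp add: patch_translate_def image_mono)

lemma image_add_right_eq: "(\<lambda>y. y + a) ` S = (+) (a::'a::ab_semigroup_add) ` S"
  by (metis add.commute)

lemma interior_fst_tile_translate:
  "interior (fst (tile_translate T a)) = (\<lambda>y. y + a) ` interior (fst T)"
  by (simp only: fst_tile_translate image_add_right_eq interior_translation)

lemma is_tile_translate: "is_tile T \<Longrightarrow> is_tile (tile_translate T a)"
  unfolding is_tile_def
  by (simp add: fst_tile_translate image_add_right_eq interior_translation closure_translation
      compact_translation)

lemma interior_fst_tile_translate_Int:
  "interior (fst (tile_translate X a)) \<inter> interior (fst (tile_translate Y a))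
    = (\<lambda>y. y + a) ` (interior (fst X) \<inter> interior (fst Y))"
  by (simp add: interior_fst_tile_translate image_Int inj_on_def)

lemma is_patch_translate:
  assumes "is_patch P"
  shows "is_patch (patch_translate P a)"
  unfolding is_patch_def
proof (intro conjI ballI impI)
  fix T assume "T \<in> patch_translate P a"
  then obtain S where "S \<in> P" "T = tile_translate S a"
    unfolding patch_translate_def by blast
  then show "is_tile T"
    using assms is_tile_translate unfolding is_patch_def by blast
next
  fix T1 T2 assume "T1 \<in> patch_translate P a" "T2 \<in> patch_translate P a" "T1 \<noteq> T2"
  then obtain S1 S2 where "S1 \<in> P" "S2 \<in> P" "S1 \<noteq> S2"
    and "T1 = tile_translate S1 a" "T2 = tile_translate S2 a"
    unfolding patch_translate_def by blast
  then show "interior (fst T1) \<inter> interior (fst T2) = {}"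
    using assms by (simp add: is_patch_def interior_fst_tile_translate_Int)
qed

lemma is_patch_subset: "is_patch P \<Longrightarrow> Q \<subseteq> P \<Longrightarrow> is_patch Q"
  unfolding is_patch_def by (meson subsetD)

lemma legal_subset: "legal S P \<Longrightarrow> Q \<subseteq> P \<Longrightarrow> legal S Q"
  unfolding legal_def by (meson order_trans patch_translate_mono)

lemma is_patch_if_legal_in_tiling:
  assumes "is_tiling T" "legal T Q"
  shows "is_patch Q"
proof -
  obtain y where "patch_translate Q y \<subseteq> T" using assms(2) unfolding legal_def by blast
  then have "is_patch (patch_translate Q y)"
    using assms(1) is_patch_subset unfolding is_tiling_def by blast
  then have "is_patch (patch_translate (patch_translate Q y) (- y))" by (rule is_patch_translate)
  then show ?thesis by (simp add: patch_translate_add)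
qed

lemma translate_cancel:
  fixes A :: "'a::real_inner set"
  assumes "compact A" "A \<noteq> {}" "(\<lambda>y. y + a) ` A = (\<lambda>y. y + c) ` A"
  shows "a = c"
proof -
  define t where "t = a - c"
  have "continuous_on A (\<lambda>y. y \<bullet> t)" by (intro continuous_intros)
  then obtain p where pA: "p \<in> A" and p_max: "\<forall>y\<in>A. y \<bullet> t \<le> p \<bullet> t"
    using continuous_attains_sup[OF assms(1,2)] by blast
  have "p + a \<in> (\<lambda>y. y + c) ` A" using assms(3) pA by blast
  then have "p + t \<in> A" by (auto simp: t_def algebra_simps)
  then have "t \<bullet> t \<le> 0" using p_max by (fastforce simp: inner_add_left)
  then have "t = 0" by (meson antisym inner_ge_zero inner_eq_zero_iff)
  then show ?thesis by (simp add: t_def)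
qed

text \<open>A tile is the closure of its interior, so a point of one tile of a patch cannot lie in
  the interior of another.\<close>
lemma patch_tile_eq_if_interior_meets:
  assumes "is_patch T" "X \<in> T" "Y \<in> T" "g \<in> interior (fst X)" "g \<in> fst Y"
  shows "X = Y"
proof -
  have "g \<in> closure (interior (fst Y))"
    using assms(1,3,5) unfolding is_patch_def is_tile_def by simp
  then have "interior (fst X) \<inter> interior (fst Y) \<noteq> {}"
    using assms(4) open_Int_closure_eq_empty[of "interior (fst X)"] by blast
  then show ?thesis using assms(1-3) unfolding is_patch_def by blast
qed

lemma is_tile_inner_ball:
  assumes "is_tile A"
  obtains m d where "d > 0" "ball m d \<subseteq> interior (fst A)"
proof -
  have "interior (fst A) \<noteq> {}"
    using assms unfolding is_tile_def by (metis closure_empty)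
  then show ?thesis using that open_contains_ball[of "interior (fst A)"] by blast
qed

lemma finite_patch_uniform_inner_ball:
  assumes "finite P" "\<forall>A\<in>P. is_tile A"
  obtains \<delta> where "\<delta> > 0" "\<forall>A\<in>P. \<exists>m. ball m \<delta> \<subseteq> interior (fst A)"
proof -
  have "\<forall>A\<in>P. \<exists>d. d > 0 \<and> (\<exists>m. ball m d \<subseteq> interior (fst A))"
    using assms(2) is_tile_inner_ball by meson
  then obtain d where d: "\<forall>A\<in>P. d A > 0 \<and> (\<exists>m. ball m (d A) \<subseteq> interior (fst A))"
    by (rule bchoice[THEN exE])
  define \<delta> where "\<delta> = Min (insert 1 (d ` P))"
  have \<delta>_pos: "\<delta> > 0" unfolding \<delta>_def using assms(1) d by (subst Min_gr_iff) auto
  have \<delta>_le: "\<delta> \<le> d A" if "A \<in> P" for A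
    unfolding \<delta>_def using assms(1) that by (intro Min_le) auto
  show ?thesis
  proof (rule that[OF \<delta>_pos], intro ballI)
    fix A assume "A \<in> P"
    then obtain m where "ball m (d A) \<subseteq> interior (fst A)" using d by blast
    moreover have "ball m \<delta> \<subseteq> ball m (d A)" using \<delta>_le[OF \<open>A \<in> P\<close>] by (rule subset_ball)
    ultimately show "\<exists>m. ball m \<delta> \<subseteq> interior (fst A)" by blast
  qed
qed

lemma bounded_supp_finite_patch:
  assumes "finite P" "\<forall>A\<in>P. is_tile A"
  shows "bounded (supp P)"
  unfolding supp_def
  using assms by (intro bounded_UN) (auto simp: is_tile_def compact_imp_bounded)

section \<open>The hull\<close>

lemma rho_lessE:
  assumes "rho P1 P2 < e" "e \<le> 1 / sqrt 2"
  obtains t x1 x2 where "0 < t" "t < e" "norm x1 \<le> t" "norm x2 \<le> t"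
    "patch_restrict (patch_translate P1 x1) (ball 0 (1/t)) =
     patch_restrict (patch_translate P2 x2) (ball 0 (1/t))"
proof -
  define E where "E = {e. 0 < e \<and> e < 1 / sqrt 2 \<and>
       (\<exists>x1 x2. norm x1 \<le> e \<and> norm x2 \<le> e \<and>
          patch_restrict (patch_translate P1 x1) (ball 0 (1/e)) =
          patch_restrict (patch_translate P2 x2) (ball 0 (1/e)))}"
  have "Inf (E \<union> {1 / sqrt 2}) < e" using assms(1) unfolding rho_def E_def by simp
  then obtain t where "t \<in> E \<union> {1 / sqrt 2}" "t < e"
    using cInf_lessD[of "E \<union> {1 / sqrt 2}" e] by blast
  with assms(2) have "t \<in> E" "t < e" by auto
  then show ?thesis using that unfolding E_def by blast
qed

lemma sqrt_2_lt_2: "sqrt 2 < 2"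
  by (smt (verit) real_sqrt_less_iff real_sqrt_four)

lemma hull_of_locally_translate:
  fixes T :: "('n::finite, 'l) tile set"
  assumes "S \<in> hull_of T"
  obtains w where "\<And>X. fst X \<inter> ball 0 r \<noteq> {} \<Longrightarrow> X \<in> S \<longleftrightarrow> tile_translate X (- w) \<in> T"
proof -
  define e where "e = 1 / (\<bar>r\<bar> + 2)"
  have e_pos: "e > 0" by (simp add: e_def add_pos_nonneg)
  have e_le: "e \<le> 1 / sqrt 2"
    unfolding e_def using sqrt_2_lt_2 by (intro divide_left_mono) auto
  obtain x where "rho S (patch_translate T x) < e"
    using assms e_pos unfolding hull_of_def by blast
  then obtain t x1 x2 where t: "0 < t" "t < e" and x12: "norm x1 \<le> t" "norm x2 \<le> t"
    and eq: "patch_restrict (patch_translate S x1) (ball 0 (1/t)) =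
      patch_restrict (patch_translate (patch_translate T x) x2) (ball 0 (1/t))"
    using e_le by (rule rho_lessE)
  have "1/e < 1/t" using t by (simp add: frac_less2)
  then have r_lt: "\<bar>r\<bar> + 2 < 1/t" by (simp add: e_def)
  have "t < 1" using t(2) e_le sqrt_2_lt_2 by (smt (verit) divide_le_eq_1 real_sqrt_ge_one)
  show ?thesis
  proof (rule that)
    fix X :: "('n, 'l) tile" assume "fst X \<inter> ball 0 r \<noteq> {}"
    then obtain q where q: "q \<in> fst X" "norm q < r" by auto
    have "norm (q + x1) \<le> norm q + norm x1" by (rule norm_triangle_ineq)
    then have "norm (q + x1) < 1/t" using q x12 \<open>t < 1\<close> r_lt by linarith
    then have meets: "fst (tile_translate X x1) \<inter> ball 0 (1/t) \<noteq> {}"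
      using q(1) by (auto simp: fst_tile_translate)
    have "X \<in> S \<longleftrightarrow> tile_translate X x1 \<in> patch_restrict (patch_translate S x1) (ball 0 (1/t))"
      using meets by (simp add: patch_restrict_def tile_translate_mem_patch_translate_iff)
    also have "\<dots> \<longleftrightarrow> tile_translate X x1 \<in> patch_translate T (x + x2)"
      using meets eq by (simp add: patch_restrict_def patch_translate_add)
    also have "\<dots> \<longleftrightarrow> tile_translate X (- (x + x2 - x1)) \<in> T"
      by (simp add: mem_patch_translate_iff tile_translate_add algebra_simps)
    finally show "X \<in> S \<longleftrightarrow> tile_translate X (- (x + x2 - x1)) \<in> T" .
  qed
qed

lemma hull_of_self: "T \<in> hull_of T"
  unfolding hull_of_def
proof (intro CollectI allI impI exI)
  fix e :: real assume "e > 0"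
  define E where "E = {e. 0 < e \<and> e < 1 / sqrt 2 \<and>
       (\<exists>x1 x2. norm x1 \<le> e \<and> norm x2 \<le> e \<and>
          patch_restrict (patch_translate T x1) (ball 0 (1/e)) =
          patch_restrict (patch_translate (patch_translate T 0) x2) (ball 0 (1/e)))}"
  define e' where "e' = min (e/2) (1/2)"
  have "1/2 < 1 / sqrt 2" using sqrt_2_lt_2 by (intro frac_less2) auto
  then have "e' < 1 / sqrt 2" unfolding e'_def by linarith
  then have "e' \<in> E" unfolding E_def e'_def using \<open>e > 0\<close> by (auto intro!: exI[of _ 0])
  moreover have "bdd_below (E \<union> {1 / sqrt 2})"
    unfolding E_def by (rule bdd_belowI[of _ 0]) auto
  ultimately have "Inf (E \<union> {1 / sqrt 2}) \<le> e'" by (intro cInf_lower) auto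
  also have "e' < e" unfolding e'_def using \<open>e > 0\<close> by simp
  finally show "rho T (patch_translate T 0) < e" unfolding rho_def E_def .
qed

lemma hull_of_interiors_meet_eq:
  assumes "is_patch T" "S \<in> hull_of T" "X1 \<in> S" "X2 \<in> S"
    and "interior (fst X1) \<inter> interior (fst X2) \<noteq> {}"
  shows "X1 = X2"
proof -
  obtain q where q: "q \<in> interior (fst X1)" "q \<in> interior (fst X2)" using assms(5) by auto
  obtain w where w: "\<And>X. fst X \<inter> ball 0 (norm q + 1) \<noteq> {} \<Longrightarrow>
      X \<in> S \<longleftrightarrow> tile_translate X (- w) \<in> T"
    using hull_of_locally_translate[OF assms(2)] by blast
  have "q \<in> ball 0 (norm q + 1)" by simp
  then have "fst X1 \<inter> ball 0 (norm q + 1) \<noteq> {}" "fst X2 \<inter> ball 0 (norm q + 1) \<noteq> {}"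
    using q interior_subset by blast+
  then have "tile_translate X1 (- w) \<in> T" "tile_translate X2 (- w) \<in> T"
    using w assms(3,4) by blast+
  moreover have "interior (fst (tile_translate X1 (- w))) \<inter> interior (fst (tile_translate X2 (- w))) \<noteq> {}"
    using assms(5) by (simp add: interior_fst_tile_translate_Int)
  ultimately have "tile_translate X1 (- w) = tile_translate X2 (- w)"
    using assms(1) unfolding is_patch_def by blast
  then show ?thesis by (simp add: tile_translate_eq_iff)
qed

section \<open>Lattice translates of a patch\<close>

abbreviation lattice_point :: "('i::finite \<Rightarrow> 'a::real_vector) \<Rightarrow> ('i \<Rightarrow> int) \<Rightarrow> 'a" where
  "lattice_point b l \<equiv> \<Sum>i\<in>UNIV. of_int (l i) *\<^sub>R b i"

abbreviation lattice_patch ::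
  "('n::finite, 'l) tile set \<Rightarrow> ('i::finite \<Rightarrow> real^'n) \<Rightarrow> ('n, 'l) tile set" where
  "lattice_patch P b \<equiv> \<Union>l. patch_translate P (lattice_point b l)"

abbreviation lattice_block ::
  "('n::finite, 'l) tile set \<Rightarrow> ('i::finite \<Rightarrow> real^'n) \<Rightarrow> nat \<Rightarrow> ('n, 'l) tile set" where
  "lattice_block P b n \<equiv>
     \<Union>l\<in>{l. \<forall>i. 1 \<le> l i \<and> l i \<le> int n}. patch_translate P (lattice_point b l)"

lemma lattice_point_add: "lattice_point b (\<lambda>i. k i + l i) = lattice_point b k + lattice_point b l"
  by (simp add: scaleR_add_left sum.distrib)

lemma lattice_point_diff: "lattice_point b (\<lambda>i. k i - l i) = lattice_point b k - lattice_point b l"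
  by (simp add: scaleR_diff_left sum_subtractf)

lemma mem_lattice_patch_translate_iff:
  "X \<in> patch_translate (lattice_patch P b) u \<longleftrightarrow>
   (\<exists>l. \<exists>A\<in>P. X = tile_translate A (lattice_point b l + u))"
  by (simp add: patch_translate_UN patch_translate_add mem_patch_translate_iff_ex)

lemma patch_translate_lattice_patch_lattice_point:
  "patch_translate (lattice_patch P b) (lattice_point b k + u) = patch_translate (lattice_patch P b) u"
proof (rule set_eqI)
  fix X
  have shift: "lattice_point b l + (lattice_point b k + u) = lattice_point b (\<lambda>i. l i + k i) + u"
    for l unfolding lattice_point_add by (simp add: add.assoc)
  show "X \<in> patch_translate (lattice_patch P b) (lattice_point b k + u) \<longleftrightarrow>
        X \<in> patch_translate (lattice_patch P b) u"
    unfolding mem_lattice_patch_translate_iff shift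
  proof
    assume "\<exists>l. \<exists>A\<in>P. X = tile_translate A (lattice_point b (\<lambda>i. l i + k i) + u)"
    then obtain l A where "A \<in> P" "X = tile_translate A (lattice_point b (\<lambda>i. l i + k i) + u)"
      by blast
    then show "\<exists>l. \<exists>A\<in>P. X = tile_translate A (lattice_point b l + u)"
      by (intro exI[of _ "\<lambda>i. l i + k i"]) blast
  next
    assume "\<exists>l. \<exists>A\<in>P. X = tile_translate A (lattice_point b l + u)"
    then obtain l A where "A \<in> P" "X = tile_translate A (lattice_point b l + u)" by blast
    then show "\<exists>l. \<exists>A\<in>P. X = tile_translate A (lattice_point b (\<lambda>i. l i + k i) + u)"
      by (intro exI[of _ "\<lambda>i. l i - k i"]) auto
  qed
qed

lemma basis_coordinates_bounded:
  fixes b :: "'i::finite \<Rightarrow> 'a::euclidean_space"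
  assumes "independent (range b)" "inj b"
  obtains \<kappa> where "\<kappa> > 0" "\<And>f i. \<bar>f i\<bar> \<le> \<kappa> * norm (\<Sum>i\<in>UNIV. f i *\<^sub>R b i)"
proof -
  define L where "L c = (\<Sum>i\<in>UNIV. (c::real^'i) $ i *\<^sub>R b i)" for c
  have "linear L"
    unfolding L_def by (rule linearI) (simp_all add: scaleR_add_left sum.distrib scaleR_right.sum)
  moreover have "inj L"
  proof (rule injI)
    fix x y assume "L x = L y"
    define c where "c v = (x - y) $ inv b v" for v
    have "(\<Sum>v\<in>range b. c v *\<^sub>R v) = (\<Sum>i\<in>UNIV. (x - y) $ i *\<^sub>R b i)"
      using assms(2) by (simp add: sum.reindex c_def)
    also have "\<dots> = 0"
      using \<open>L x = L y\<close> by (simp add: L_def scaleR_diff_left sum_subtractf)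
    finally have "\<forall>v\<in>range b. c v = 0"
      using assms(1) unfolding independent_explicit by blast
    then show "x = y" using assms(2) by (simp add: c_def vec_eq_iff)
  qed
  ultimately obtain B where B: "B > 0" "\<And>x. B * norm x \<le> norm (L x)"
    using linear_inj_bounded_below_pos by blast
  show ?thesis
  proof (rule that)
    show "1 / B > 0" using B by simp
    fix f :: "'i \<Rightarrow> real" and i
    have "\<bar>f i\<bar> = \<bar>(\<chi> j. f j) $ i\<bar>" by simp
    also have "\<dots> \<le> norm (\<chi> j. f j)" by (rule component_le_norm_cart)
    also have "\<dots> \<le> norm (L (\<chi> j. f j)) / B" using B by (simp add: field_simps)
    also have "L (\<chi> j. f j) = (\<Sum>i\<in>UNIV. f i *\<^sub>R b i)" by (simp add: L_def)
    finally show "\<bar>f i\<bar> \<le> 1 / B * norm (\<Sum>i\<in>UNIV. f i *\<^sub>R b i)" by simp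
  qed
qed

lemma lattice_point_near:
  fixes b :: "'i::finite \<Rightarrow> 'a::real_normed_vector"
  assumes "inj b" "span (range b) = UNIV"
  obtains k where "norm (z - lattice_point b k) \<le> (\<Sum>i\<in>UNIV. norm (b i))"
proof -
  obtain u where "z = (\<Sum>v\<in>range b. u v *\<^sub>R v)"
    using assms(2) span_finite[of "range b"] by auto
  also have "\<dots> = (\<Sum>i\<in>UNIV. u (b i) *\<^sub>R b i)"
    using assms(1) by (simp add: sum.reindex)
  finally have z: "z = (\<Sum>i\<in>UNIV. u (b i) *\<^sub>R b i)" .
  define k where "k i = \<lfloor>u (b i)\<rfloor>" for i
  have "z - lattice_point b k = (\<Sum>i\<in>UNIV. (u (b i) - of_int (k i)) *\<^sub>R b i)"
    unfolding z by (simp add: scaleR_diff_left sum_subtractf)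
  also have "norm \<dots> \<le> (\<Sum>i\<in>UNIV. norm ((u (b i) - of_int (k i)) *\<^sub>R b i))"
    by (rule norm_sum)
  also have "\<dots> \<le> (\<Sum>i\<in>UNIV. norm (b i))"
  proof (rule sum_mono)
    fix i
    have "0 \<le> u (b i) - of_int (k i)" "u (b i) - of_int (k i) \<le> 1"
      unfolding k_def by linarith+
    then show "norm ((u (b i) - of_int (k i)) *\<^sub>R b i) \<le> norm (b i)"
      by (simp add: mult_left_le_one_le)
  qed
  finally show ?thesis by (rule that)
qed

section \<open>Recurrence of the lattice patch\<close>

lemma repetitive_finite_net:
  fixes T :: "('n::finite, 'l) tile set"
  assumes "is_tiling T" "repetitive T" "compact K" "\<delta> > 0"
  obtains G Y R where "K \<subseteq> (\<Union>g\<in>G. ball g \<delta>)" "\<And>g. Y g \<in> T" "\<And>g. g \<in> fst (Y g)"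
    "\<And>c. \<exists>x. \<forall>g\<in>G. tile_translate (Y g) x \<in> T \<and> dist c (g + x) \<le> R"
proof -
  have "K \<subseteq> (\<Union>g\<in>K. ball g \<delta>)" using assms(4) by auto
  then obtain G where "finite G" and cover: "K \<subseteq> (\<Union>g\<in>G. ball g \<delta>)"
    by (rule compactE_image[OF assms(3) open_ball]) blast
  have "\<forall>g. \<exists>Y. Y \<in> T \<and> g \<in> fst Y" using assms(1) unfolding is_tiling_def supp_def by blast
  then obtain Y where Y: "\<And>g. Y g \<in> T" "\<And>g. g \<in> fst (Y g)" by metis
  have YG: "Y ` G \<subseteq> T" using Y(1) by blast
  have "finite (Y ` G)" using \<open>finite G\<close> by simp
  moreover have "is_patch (Y ` G)"
    using assms(1) YG is_patch_subset unfolding is_tiling_def by blast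
  moreover have "legal T (Y ` G)"
    unfolding legal_def using YG by (intro exI[of _ 0]) simp
  ultimately obtain R where R: "\<And>c. \<exists>x. patch_translate (Y ` G) x \<subseteq> T \<and>
      supp (patch_translate (Y ` G) x) \<subseteq> cball c R"
    using assms(2) unfolding repetitive_def by blast
  show ?thesis
  proof (rule that[OF cover Y])
    fix c
    obtain x where x: "patch_translate (Y ` G) x \<subseteq> T" "supp (patch_translate (Y ` G) x) \<subseteq> cball c R"
      using R by blast
    have "tile_translate (Y g) x \<in> T \<and> dist c (g + x) \<le> R" if "g \<in> G" for g
    proof -
      have "tile_translate (Y g) x \<in> patch_translate (Y ` G) x"
        using that by (simp add: tile_translate_mem_patch_translate_iff)
      moreover have "g + x \<in> fst (tile_translate (Y g) x)"
        using Y(2) by (simp add: fst_tile_translate)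
      ultimately have "g + x \<in> cball c R" using x unfolding supp_def by blast
      then show ?thesis using x(1) \<open>tile_translate (Y g) x \<in> patch_translate (Y ` G) x\<close> by auto
    qed
    then show "\<exists>x. \<forall>g\<in>G. tile_translate (Y g) x \<in> T \<and> dist c (g + x) \<le> R" by blast
  qed
qed

lemma translated_tile_meets_net:
  assumes "\<delta> > 0" "ball m \<delta> \<subseteq> interior (fst A)" "\<forall>a\<in>fst A. norm a \<le> M"
    and "fst (tile_translate A t) \<inter> ball c r \<noteq> {}"
    and "cball c (r + 2 * M) \<subseteq> (\<Union>g\<in>G. ball g \<delta>)"
  obtains g where "g \<in> G" "g \<in> interior (fst (tile_translate A t))" "norm (g - t) \<le> M"
proof -
  obtain a where a: "a \<in> fst A" "dist c (a + t) < r"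
    using assms(4) by (auto simp: fst_tile_translate)
  have m: "m \<in> fst A" using assms(1,2) interior_subset by (metis centre_in_ball subsetD)
  have "dist c (m + t) \<le> dist c (a + t) + dist (a + t) (m + t)" by (rule dist_triangle)
  moreover have "dist (a + t) (m + t) \<le> norm a + norm m"
    using norm_triangle_ineq4[of a m] by (simp add: dist_norm)
  moreover have "norm a \<le> M" "norm m \<le> M" using a(1) m assms(3) by auto
  ultimately have "m + t \<in> cball c (r + 2 * M)" using a(2) by simp
  then obtain g where g: "g \<in> G" "dist g (m + t) < \<delta>" using assms(5) by auto
  then have "dist m (g - t) < \<delta>" by (simp add: dist_norm norm_minus_commute algebra_simps)
  then have gt: "g - t \<in> interior (fst A)" using assms(2) by auto
  show ?thesis
  proof (rule that[OF g(1)])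
    show "g \<in> interior (fst (tile_translate A t))"
      using gt unfolding interior_fst_tile_translate by (rule rev_image_eqI) simp
    show "norm (g - t) \<le> M" using gt interior_subset assms(3) by blast
  qed
qed

lemma finite_patch_translates_meet_net:
  fixes P :: "('n::finite, 'l) tile set"
  assumes "finite P" "\<forall>A\<in>P. is_tile A"
  obtains \<delta> M where "\<delta> > 0"
    "\<And>A t c r G. A \<in> P \<Longrightarrow> fst (tile_translate A t) \<inter> ball c r \<noteq> {} \<Longrightarrow>
      cball c (r + 2 * M) \<subseteq> (\<Union>g\<in>G. ball g \<delta>) \<Longrightarrow>
      \<exists>g\<in>G. g \<in> interior (fst (tile_translate A t)) \<and> norm (g - t) \<le> M"
proof -
  obtain \<delta> where \<delta>: "\<delta> > 0" "\<forall>A\<in>P. \<exists>m. ball m \<delta> \<subseteq> interior (fst A)"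
    using finite_patch_uniform_inner_ball[OF assms] by blast
  obtain M where "\<forall>x\<in>supp P. norm x \<le> M"
    using bounded_supp_finite_patch[OF assms] unfolding bounded_iff by blast
  then have M: "\<forall>a\<in>fst A. norm a \<le> M" if "A \<in> P" for A
    using that unfolding supp_def by blast
  show ?thesis
  proof (rule that[OF \<delta>(1)])
    fix A t c r G assume "A \<in> P" and "fst (tile_translate A t) \<inter> ball c r \<noteq> {}"
      and "cball c (r + 2 * M) \<subseteq> (\<Union>g\<in>G. ball g \<delta>)"
    moreover obtain m where "ball m \<delta> \<subseteq> interior (fst A)" using \<delta>(2) \<open>A \<in> P\<close> by blast
    ultimately show "\<exists>g\<in>G. g \<in> interior (fst (tile_translate A t)) \<and> norm (g - t) \<le> M"
      using translated_tile_meets_net[OF \<delta>(1) _ M] by metis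
  qed
qed

lemma lattice_index_in_block:
  fixes b :: "'i::finite \<Rightarrow> 'a::real_normed_vector"
  assumes "\<And>f i. \<bar>f i\<bar> \<le> \<kappa> * norm (\<Sum>i\<in>UNIV. f i *\<^sub>R b i)" "\<kappa> \<ge> 0"
    and "norm (lattice_point b (\<lambda>i. int N - l i)) \<le> \<rho>" "\<kappa> * \<rho> < real N"
  shows "1 \<le> l i \<and> l i \<le> int (2 * N)"
proof -
  have "\<bar>real_of_int (int N - l i)\<bar> \<le> \<kappa> * norm (lattice_point b (\<lambda>i. int N - l i))"
    using assms(1)[of "\<lambda>i. real_of_int (int N - l i)" i] by simp
  also have "\<dots> \<le> \<kappa> * \<rho>" using assms(2,3) by (rule mult_left_mono[rotated])
  finally have "\<bar>int N - l i\<bar> < int N" using assms(4) by linarith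
  then show ?thesis by linarith
qed

lemma lattice_patch_locally_in_tiling:
  fixes T :: "('n::finite, 'l) tile set" and b :: "'i::finite \<Rightarrow> real^'n"
  assumes tiling: "is_tiling T" and rep: "repetitive T"
    and fP: "finite P" and tP: "\<forall>A\<in>P. is_tile A"
    and "independent (range b)" "inj b"
    and blocks: "\<And>n. n > 0 \<Longrightarrow> legal T (lattice_block P b n)"
  obtains u where
    "\<And>X. X \<in> patch_translate (lattice_patch P b) u \<Longrightarrow> fst X \<inter> ball c r \<noteq> {} \<Longrightarrow> X \<in> T"
proof -
  obtain \<kappa> where \<kappa>: "\<kappa> > 0" "\<And>f i. \<bar>f i\<bar> \<le> \<kappa> * norm (\<Sum>i\<in>UNIV. f i *\<^sub>R b i)"
    using basis_coordinates_bounded assms(5,6) by blast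
  obtain \<delta> M where "\<delta> > 0" and net: "\<And>A t c r G. A \<in> P \<Longrightarrow>
      fst (tile_translate A t) \<inter> ball c r \<noteq> {} \<Longrightarrow> cball c (r + 2 * M) \<subseteq> (\<Union>g\<in>G. ball g \<delta>) \<Longrightarrow>
      \<exists>g\<in>G. g \<in> interior (fst (tile_translate A t)) \<and> norm (g - t) \<le> M"
    using finite_patch_translates_meet_net[OF fP tP] by blast
  obtain G Y R where cover: "cball c (r + 2 * M) \<subseteq> (\<Union>g\<in>G. ball g \<delta>)"
    and Y: "\<And>g. Y g \<in> T" "\<And>g. g \<in> fst (Y g)"
    and recur: "\<And>c'. \<exists>x. \<forall>g\<in>G. tile_translate (Y g) x \<in> T \<and> dist c' (g + x) \<le> R"
    using repetitive_finite_net[OF tiling rep compact_cball[of c "r + 2 * M"] \<open>\<delta> > 0\<close>] by blast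
  \<comment> \<open>lattice points within R + M of the centre of the block have all indices in {1..2N}\<close>
  define N :: nat where "N = nat \<lceil>\<kappa> * (R + M)\<rceil> + 1"
  have N: "\<kappa> * (R + M) < real N" unfolding N_def by linarith
  obtain y where y: "patch_translate (lattice_block P b (2 * N)) y \<subseteq> T"
    using blocks[of "2 * N"] unfolding legal_def N_def by auto
  define centre where "centre = y + lattice_point b (\<lambda>_. int N)"
  obtain x where x: "\<forall>g\<in>G. tile_translate (Y g) x \<in> T \<and> dist centre (g + x) \<le> R"
    using recur by blast
  show ?thesis
  proof (rule that)
    fix X assume "X \<in> patch_translate (lattice_patch P b) (y - x)" and meets: "fst X \<inter> ball c r \<noteq> {}"
    then obtain l A where A: "A \<in> P" and X: "X = tile_translate A (lattice_point b l + (y - x))"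
      unfolding mem_lattice_patch_translate_iff by blast
    then obtain g where g: "g \<in> G" "g \<in> interior (fst X)"
      and g_near: "norm (g - (lattice_point b l + (y - x))) \<le> M"
      using net[OF A meets[unfolded X] cover] by blast
    have "lattice_point b (\<lambda>i. int N - l i) = (centre - (g + x)) + (g - (lattice_point b l + (y - x)))"
      unfolding lattice_point_diff centre_def by (simp add: algebra_simps)
    also have "norm \<dots> \<le> dist centre (g + x) + norm (g - (lattice_point b l + (y - x)))"
      unfolding dist_norm by (rule norm_triangle_ineq)
    also have "\<dots> \<le> R + M" using x g(1) g_near by (meson add_mono)
    finally have l_range: "1 \<le> l i \<and> l i \<le> int (2 * N)" for i
      using lattice_index_in_block[OF \<kappa>(2) _ _ N] \<kappa>(1) by simp
    have "tile_translate X x = tile_translate A (lattice_point b l + y)"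
      unfolding X tile_translate_add by (simp add: algebra_simps)
    also have "\<dots> \<in> patch_translate (lattice_block P b (2 * N)) y"
      unfolding patch_translate_UN patch_translate_add
      using A l_range by (intro UN_I[of l]) (simp_all add: tile_translate_mem_patch_translate_iff)
    finally have "tile_translate X x \<in> T" using y by blast
    moreover have "tile_translate (Y g) x \<in> T" using x g(1) by blast
    moreover have "g + x \<in> interior (fst (tile_translate X x))"
      using g(2) by (simp add: interior_fst_tile_translate)
    moreover have "g + x \<in> fst (tile_translate (Y g) x)"
      using Y(2) by (simp add: fst_tile_translate)
    ultimately have "tile_translate X x = tile_translate (Y g) x"
      using tiling patch_tile_eq_if_interior_meets unfolding is_tiling_def by blast
    then show "X \<in> T" using Y(1) by (simp add: tile_translate_eq_iff)
  qed
qed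

lemma lattice_patch_locally_in_hull:
  fixes T :: "('n::finite, 'l) tile set" and b :: "'i::finite \<Rightarrow> real^'n"
  assumes "is_tiling T" "repetitive T" "finite P" "\<forall>A\<in>P. is_tile A"
    and "independent (range b)" "inj b" "span (range b) = UNIV"
    and "\<And>n. n > 0 \<Longrightarrow> legal T (lattice_block P b n)"
    and "S \<in> hull_of T"
  obtains z where "norm z \<le> (\<Sum>i\<in>UNIV. norm (b i))"
    "\<And>X. X \<in> patch_translate (lattice_patch P b) z \<Longrightarrow> fst X \<inter> ball 0 r \<noteq> {} \<Longrightarrow> X \<in> S"
proof -
  obtain w where w: "\<And>X. fst X \<inter> ball 0 r \<noteq> {} \<Longrightarrow> X \<in> S \<longleftrightarrow> tile_translate X (- w) \<in> T"
    using hull_of_locally_translate[OF assms(9)] by blast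
  obtain u where u: "\<And>X. X \<in> patch_translate (lattice_patch P b) u \<Longrightarrow>
      fst X \<inter> ball (- w) r \<noteq> {} \<Longrightarrow> X \<in> T"
    using lattice_patch_locally_in_tiling[OF assms(1-6,8)] by blast
  obtain k where k: "norm (u + w - lattice_point b k) \<le> (\<Sum>i\<in>UNIV. norm (b i))"
    using lattice_point_near[OF assms(6,7)] by blast
  show ?thesis
  proof (rule that[OF k])
    fix X assume X: "X \<in> patch_translate (lattice_patch P b) (u + w - lattice_point b k)"
      and meets: "fst X \<inter> ball 0 r \<noteq> {}"
    have "X \<in> patch_translate (lattice_patch P b) (u + w)"
      using X patch_translate_lattice_patch_lattice_point[of P b k "u + w - lattice_point b k"]
      by simp
    then have "tile_translate X (- w) \<in> patch_translate (lattice_patch P b) u"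
      by (simp add: mem_patch_translate_iff tile_translate_add algebra_simps)
    moreover obtain q where "q \<in> fst X" "norm q < r" using meets by auto
    then have "q - w \<in> fst (tile_translate X (- w)) \<inter> ball (- w) r"
      by (auto simp: fst_tile_translate dist_norm)
    ultimately have "tile_translate X (- w) \<in> T" using u by blast
    then show "X \<in> S" using w meets by blast
  qed
qed

lemma eventually_constant_translates:
  fixes z :: "nat \<Rightarrow> real^'n::finite"
  assumes disjoint: "\<And>X1 X2. X1 \<in> S \<Longrightarrow> X2 \<in> S \<Longrightarrow>
      interior (fst X1) \<inter> interior (fst X2) \<noteq> {} \<Longrightarrow> X1 = X2"
    and "is_tile A" "convergent z"
    and "\<forall>\<^sub>F k in sequentially. tile_translate A (z k) \<in> S"
  shows "\<exists>K. \<forall>k\<ge>K. z k = z K"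
proof -
  obtain p \<delta> where "\<delta> > 0" and p: "ball p \<delta> \<subseteq> interior (fst A)"
    using is_tile_inner_ball[OF assms(2)] by blast
  have "Cauchy z" using assms(3) by (simp add: convergent_Cauchy)
  then obtain N1 where N1: "\<And>m n. m \<ge> N1 \<Longrightarrow> n \<ge> N1 \<Longrightarrow> dist (z m) (z n) < \<delta>"
    using metric_CauchyD \<open>\<delta> > 0\<close> by blast
  obtain N2 where N2: "\<And>k. k \<ge> N2 \<Longrightarrow> tile_translate A (z k) \<in> S"
    using assms(4) unfolding eventually_sequentially by blast
  define K where "K = max N1 N2"
  have "z k = z K" if "k \<ge> K" for k
  proof -
    have "p \<in> interior (fst A)" using p \<open>\<delta> > 0\<close> by auto
    then have "p + z k \<in> interior (fst (tile_translate A (z k)))"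
      unfolding interior_fst_tile_translate by (rule imageI)
    moreover have "p + (z k - z K) \<in> interior (fst A)"
      using p N1[of k K] that by (auto simp: K_def dist_norm norm_minus_commute)
    then have "p + z k \<in> interior (fst (tile_translate A (z K)))"
      unfolding interior_fst_tile_translate by (rule rev_image_eqI) (simp add: algebra_simps)
    moreover have "tile_translate A (z k) \<in> S" "tile_translate A (z K) \<in> S"
      using N2 that by (simp_all add: K_def)
    ultimately have "tile_translate A (z k) = tile_translate A (z K)"
      using disjoint by blast
    then have "(\<lambda>y. y + z k) ` fst A = (\<lambda>y. y + z K) ` fst A" by (metis fst_tile_translate)
    then show ?thesis using assms(2) translate_cancel unfolding is_tile_def by blast
  qed
  then show ?thesis by blast
qed

lemma legal_if_bounded_local_matches:
  fixes U :: "('n::finite, 'l) tile set"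
  assumes disjoint: "\<And>X1 X2. X1 \<in> S \<Longrightarrow> X2 \<in> S \<Longrightarrow>
      interior (fst X1) \<inter> interior (fst X2) \<noteq> {} \<Longrightarrow> X1 = X2"
    and "A \<in> U" "is_tile A" "\<And>X. X \<in> U \<Longrightarrow> fst X \<noteq> {}"
    and local_matches: "\<And>r. \<exists>z. norm z \<le> B \<and>
      (\<forall>X\<in>patch_translate U z. fst X \<inter> ball 0 r \<noteq> {} \<longrightarrow> X \<in> S)"
  shows "legal S U"
proof -
  have "\<forall>m::nat. \<exists>z. norm z \<le> B \<and>
      (\<forall>X\<in>patch_translate U z. fst X \<inter> ball 0 (real m) \<noteq> {} \<longrightarrow> X \<in> S)"
    using local_matches by blast
  then obtain zs where zs: "\<forall>m. norm (zs m) \<le> B \<and>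
      (\<forall>X\<in>patch_translate U (zs m). fst X \<inter> ball 0 (real m) \<noteq> {} \<longrightarrow> X \<in> S)"
    by (rule choice[THEN exE])
  then have B: "\<And>m. norm (zs m) \<le> B"
    and matches: "\<And>m X. X \<in> patch_translate U (zs m) \<Longrightarrow> fst X \<inter> ball 0 (real m) \<noteq> {} \<Longrightarrow> X \<in> S"
    by blast+
  have "bounded (range zs)" using B unfolding bounded_iff by blast
  then obtain r z where r: "strict_mono r" and "(zs \<circ> r) \<longlonglongrightarrow> z"
    using bounded_imp_convergent_subsequence by blast
  then have "convergent (\<lambda>k. zs (r k))" by (auto simp: convergent_def o_def)
  obtain p where p: "p \<in> fst A" using assms(2,4) by blast
  have "\<forall>\<^sub>F k in sequentially. tile_translate A (zs (r k)) \<in> S"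
  proof (rule eventually_sequentiallyI)
    fix k assume "nat \<lceil>norm p + B\<rceil> + 1 \<le> k"
    then have "norm p + B < real (r k)" using seq_suble[OF r, of k] by linarith
    then have "norm (p + zs (r k)) < real (r k)"
      using norm_triangle_ineq[of p "zs (r k)"] B[of "r k"] by linarith
    then have "fst (tile_translate A (zs (r k))) \<inter> ball 0 (real (r k)) \<noteq> {}"
      using p by (auto simp: fst_tile_translate)
    moreover have "tile_translate A (zs (r k)) \<in> patch_translate U (zs (r k))"
      using assms(2) by (simp add: tile_translate_mem_patch_translate_iff)
    ultimately show "tile_translate A (zs (r k)) \<in> S" using matches by blast
  qed
  then obtain K where K: "\<And>k. k \<ge> K \<Longrightarrow> zs (r k) = zs (r K)"
    using eventually_constant_translates[OF disjoint assms(3) \<open>convergent _\<close>] by blast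
  show ?thesis
    unfolding legal_def
  proof (intro exI subsetI)
    fix X assume X: "X \<in> patch_translate U (zs (r K))"
    then have "tile_translate X (- zs (r K)) \<in> U" by (simp add: mem_patch_translate_iff)
    then have "fst (tile_translate X (- zs (r K))) \<noteq> {}" using assms(4) by blast
    then obtain q where q: "q \<in> fst X" by (auto simp: fst_tile_translate)
    define k where "k = max K (nat \<lceil>norm q\<rceil> + 1)"
    have "norm q < real (r k)" using seq_suble[OF r, of k] unfolding k_def by linarith
    then have "fst X \<inter> ball 0 (real (r k)) \<noteq> {}" using q by auto
    moreover have "X \<in> patch_translate U (zs (r k))" using X K[of k] by (simp add: k_def)
    ultimately show "X \<in> S" using matches by blast
  qed
qed

lemma lattice_patch_legal_in_hull:
  fixes T :: "('n::finite, 'l) tile set" and b :: "'i::finite \<Rightarrow> real^'n"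
  assumes "is_tiling T" "repetitive T" "finite P" "P \<noteq> {}" "is_patch P"
    and "independent (range b)" "inj b" "span (range b) = UNIV"
    and "\<And>n. n > 0 \<Longrightarrow> legal T (lattice_block P b n)"
    and "S \<in> hull_of T"
  shows "legal S (lattice_patch P b)"
proof -
  have tiles: "\<forall>A\<in>P. is_tile A" using assms(5) unfolding is_patch_def by blast
  have local_matches: "\<exists>z. norm z \<le> (\<Sum>i\<in>UNIV. norm (b i)) \<and>
      (\<forall>X\<in>patch_translate (lattice_patch P b) z. fst X \<inter> ball 0 r \<noteq> {} \<longrightarrow> X \<in> S)" for r
  proof -
    obtain z where "norm z \<le> (\<Sum>i\<in>UNIV. norm (b i))"
      "\<And>X. X \<in> patch_translate (lattice_patch P b) z \<Longrightarrow> fst X \<inter> ball 0 r \<noteq> {} \<Longrightarrow> X \<in> S"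
      using lattice_patch_locally_in_hull[OF assms(1-3) tiles assms(6-10)] by blast
    then show ?thesis by blast
  qed
  obtain A where "A \<in> P" using assms(4) by blast
  then have A: "A \<in> lattice_patch P b" by (intro UN_I[of "\<lambda>_. 0"]) simp_all
  have nonempty: "fst X \<noteq> {}" if X: "X \<in> lattice_patch P b" for X
  proof -
    obtain l where "X \<in> patch_translate P (lattice_point b l)" using X by blast
    then obtain A' where "A' \<in> P" "X = tile_translate A' (lattice_point b l)"
      unfolding mem_patch_translate_iff_ex by blast
    then show ?thesis using tiles by (simp add: fst_tile_translate is_tile_def)
  qed
  have "is_patch T" using assms(1) unfolding is_tiling_def by blast
  moreover have "is_tile A" using tiles \<open>A \<in> P\<close> by blast
  ultimately show ?thesis
    using legal_if_bounded_local_matches[OF hull_of_interiors_meet_eq[OF _ assms(10)] A _ nonempty local_matches]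
    by blast
qed

theorem lemma2p5:
  fixes \<T> :: "('n::finite, 'l) tile set"
    and P :: "('n, 'l) tile set"
    and b :: "'n \<Rightarrow> real^'n"
  assumes "is_tiling \<T>" and "finite_local_complexity \<T>" and "repetitive \<T>"
    and "finite P" and "P \<noteq> {}" and "is_patch P" and "legal \<T> P"
    and "independent (range b)" and "inj b" and "span (range b) = UNIV"
  shows "(\<forall>n::nat. n > 0 \<longrightarrow>
            (let Q = (\<Union>l\<in>{l::'n \<Rightarrow> int. \<forall>i. 1 \<le> l i \<and> l i \<le> int n}.
                        patch_translate P (\<Sum>i\<in>UNIV. of_int (l i) *\<^sub>R b i))
             in is_patch Q \<and> legal \<T> Q))
     \<longleftrightarrow>
         (\<forall>S\<in>hull_of \<T>. legal S (\<Union>l::'n \<Rightarrow> int.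
                        patch_translate P (\<Sum>i\<in>UNIV. of_int (l i) *\<^sub>R b i)))"
  unfolding Let_def
proof (intro iffI ballI allI impI)
  fix S assume "\<forall>n>0. is_patch (lattice_block P b n) \<and> legal \<T> (lattice_block P b n)"
    and "S \<in> hull_of \<T>"
  then show "legal S (lattice_patch P b)"
    by (intro lattice_patch_legal_in_hull[OF assms(1,3-6,8-10)]) simp_all
next
  fix n :: nat assume "\<forall>S\<in>hull_of \<T>. legal S (lattice_patch P b)"
  then have "legal \<T> (lattice_patch P b)" using hull_of_self by blast
  moreover have "lattice_block P b n \<subseteq> lattice_patch P b" by (rule UN_mono) simp_all
  ultimately have "legal \<T> (lattice_block P b n)" by (rule legal_subset)
  then show "is_patch (lattice_block P b n) \<and> legal \<T> (lattice_block P b n)"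
    using is_patch_if_legal_in_tiling[OF assms(1)] by blast
qed

end
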